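(* For a bigraph $X$, the poset $C(X^{K_2})$ is homotopy equivalent to the box complex $B_{/K_2}(X)$.
   Context: A graph is a set $V$ with a symmetric relation $E\subset V\times V$ (loops allowed). $K_2$ has vertices $0,1$ and edges $(0,1),(1,0)$, and is a bigraph via the identity coloring. A bigraph is a graph $X$ with a graph homomorphism $\varepsilon_X:X\to K_2$; $V_i(X)=\varepsilon_X^{-1}(i)$. $X^{K_2}$ is the graph whose vertices are maps $f:\{0,1\}\to V(X)$ with $f(0)\in V_0(X)$, $f(1)\in V_1(X)$, with $f,g$ adjacent iff $(f(0),g(1))\in E(X)$ and $(f(1),g(0))\in E(X)$. For a graph $G$, $C(G)$ is the poset of finite nonempty $\sigma\subset V(G)$ with $\sigma\times\sigma\subset E(G)$, ordered by inclusion. $B_{/K_2}(X)$ is the poset of pairs $(\sigma,\tau)$, $\sigma\subset V_0(X)$, $\tau\subset V_1(X)$ finite nonempty with $\sigma\times\tau\subset E(X)$, ordered componentwise by inclusion. Posets are regarded as spaces via geometric realizations of order complexes. *)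

theory Defs
  imports "HOL-Analysis.Analysis"
begin

definition is_graph :: "'v set \<Rightarrow> ('v \<times> 'v) set \<Rightarrow> bool" where
  "is_graph V E \<longleftrightarrow> E \<subseteq> V \<times> V \<and> sym E"

definition K2_V :: "nat set" where "K2_V = {0, 1}"
definition K2_E :: "(nat \<times> nat) set" where "K2_E = {(0, 1), (1, 0)}"

definition graph_hom :: "'v set \<Rightarrow> ('v \<times> 'v) set \<Rightarrow> 'w set \<Rightarrow> ('w \<times> 'w) set \<Rightarrow> ('v \<Rightarrow> 'w) \<Rightarrow> bool" where
  "graph_hom V E W F h \<longleftrightarrow> (\<forall>x\<in>V. h x \<in> W) \<and> (\<forall>(x, y)\<in>E. (h x, h y) \<in> F)"

definition is_bigraph :: "'v set \<Rightarrow> ('v \<times> 'v) set \<Rightarrow> ('v \<Rightarrow> nat) \<Rightarrow> bool" where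
  "is_bigraph V E eps \<longleftrightarrow> is_graph V E \<and> graph_hom V E K2_V K2_E eps"

definition part :: "'v set \<Rightarrow> ('v \<Rightarrow> nat) \<Rightarrow> nat \<Rightarrow> 'v set" where
  "part V eps i = {x \<in> V. eps x = i}"

text \<open>X^{K_2}: a vertex is a map f : {0,1} \<rightarrow> V(X) with f(0) \<in> V_0, f(1) \<in> V_1,
  represented as the pair (f 0, f 1).\<close>
definition expK2_V :: "'v set \<Rightarrow> ('v \<Rightarrow> nat) \<Rightarrow> ('v \<times> 'v) set" where
  "expK2_V V eps = part V eps 0 \<times> part V eps 1"

definition expK2_E :: "'v set \<Rightarrow> ('v \<times> 'v) set \<Rightarrow> ('v \<Rightarrow> nat) \<Rightarrow> (('v \<times> 'v) \<times> ('v \<times> 'v)) set" where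
  "expK2_E V E eps = {(f, g). f \<in> expK2_V V eps \<and> g \<in> expK2_V V eps \<and>
                              (fst f, snd g) \<in> E \<and> (snd f, fst g) \<in> E}"

definition clique_poset :: "'v set \<Rightarrow> ('v \<times> 'v) set \<Rightarrow> 'v set set" where
  "clique_poset V E = {\<sigma>. finite \<sigma> \<and> \<sigma> \<noteq> {} \<and> \<sigma> \<subseteq> V \<and> \<sigma> \<times> \<sigma> \<subseteq> E}"

definition box_poset :: "'v set \<Rightarrow> ('v \<times> 'v) set \<Rightarrow> ('v \<Rightarrow> nat) \<Rightarrow> ('v set \<times> 'v set) set" where
  "box_poset V E eps = {(\<sigma>, \<tau>). finite \<sigma> \<and> \<sigma> \<noteq> {} \<and> \<sigma> \<subseteq> part V eps 0 \<and>
                                finite \<tau> \<and> \<tau> \<noteq> {} \<and> \<tau> \<subseteq> part V eps 1 \<and> \<sigma> \<times> \<tau> \<subseteq> E}"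

definition box_le :: "'v set \<times> 'v set \<Rightarrow> 'v set \<times> 'v set \<Rightarrow> bool" where
  "box_le p q \<longleftrightarrow> fst p \<subseteq> fst q \<and> snd p \<subseteq> snd q"

text \<open>Points are functions P \<rightarrow> [0,1] with finite nonempty support which is a chain,
  summing to 1 (barycentric coordinates). The topology is the standard (weak/coherent)
  one: a set is open iff its intersection with every closed simplex (spanned by a
  finite chain) is open in that simplex, where a simplex carries the Euclidean
  (= product) topology.\<close>

definition is_chain_in :: "'a set \<Rightarrow> ('a \<Rightarrow> 'a \<Rightarrow> bool) \<Rightarrow> 'a set \<Rightarrow> bool" where
  "is_chain_in P le c \<longleftrightarrow> c \<subseteq> P \<and> (\<forall>x\<in>c. \<forall>y\<in>c. le x y \<or> le y x)"

definition supp :: "('a \<Rightarrow> real) \<Rightarrow> 'a set" where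
  "supp f = {x. f x \<noteq> 0}"

definition realization_carrier :: "'a set \<Rightarrow> ('a \<Rightarrow> 'a \<Rightarrow> bool) \<Rightarrow> ('a \<Rightarrow> real) set" where
  "realization_carrier P le = {f. finite (supp f) \<and> is_chain_in P le (supp f) \<and>
                                  (\<forall>x. 0 \<le> f x) \<and> sum f (supp f) = 1}"

definition closed_simplex :: "'a set \<Rightarrow> ('a \<Rightarrow> 'a \<Rightarrow> bool) \<Rightarrow> 'a set \<Rightarrow> ('a \<Rightarrow> real) set" where
  "closed_simplex P le c = {f \<in> realization_carrier P le. supp f \<subseteq> c}"

definition simplex_topology :: "'a set \<Rightarrow> ('a \<Rightarrow> 'a \<Rightarrow> bool) \<Rightarrow> 'a set \<Rightarrow> ('a \<Rightarrow> real) topology" where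
  "simplex_topology P le c =
     subtopology (product_topology (\<lambda>_. euclideanreal) UNIV) (closed_simplex P le c)"

definition realization_open :: "'a set \<Rightarrow> ('a \<Rightarrow> 'a \<Rightarrow> bool) \<Rightarrow> ('a \<Rightarrow> real) set \<Rightarrow> bool" where
  "realization_open P le U \<longleftrightarrow> U \<subseteq> realization_carrier P le \<and>
     (\<forall>c. finite c \<and> is_chain_in P le c \<longrightarrow>
          openin (simplex_topology P le c) (U \<inter> closed_simplex P le c))"

lemma istopology_realization_open: "istopology (realization_open P le)"
  unfolding istopology_def
proof safe
  fix S T assume S: "realization_open P le S" and T: "realization_open P le T"
  show "realization_open P le (S \<inter> T)"
    unfolding realization_open_def
  proof safe
    fix c assume c: "finite c" "is_chain_in P le c"
    have "S \<inter> T \<inter> closed_simplex P le c =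
          (S \<inter> closed_simplex P le c) \<inter> (T \<inter> closed_simplex P le c)" by blast
    then show "openin (simplex_topology P le c) (S \<inter> T \<inter> closed_simplex P le c)"
      using S T c unfolding realization_open_def by (metis openin_Int)
  qed (use S in \<open>auto simp: realization_open_def\<close>)
next
  fix K assume K: "\<forall>S\<in>K. realization_open P le S"
  show "realization_open P le (\<Union>K)"
    unfolding realization_open_def
  proof safe
    fix c assume c: "finite c" "is_chain_in P le c"
    have "\<Union>K \<inter> closed_simplex P le c = \<Union>((\<lambda>S. S \<inter> closed_simplex P le c) ` K)" by blast
    moreover have "\<forall>S\<in>K. openin (simplex_topology P le c) (S \<inter> closed_simplex P le c)"
      using K c unfolding realization_open_def by blast
    ultimately show "openin (simplex_topology P le c) (\<Union>K \<inter> closed_simplex P le c)"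
      by (metis (no_types, lifting) imageE openin_Union)
  qed (use K in \<open>auto simp: realization_open_def\<close>)
qed

definition realization :: "'a set \<Rightarrow> ('a \<Rightarrow> 'a \<Rightarrow> bool) \<Rightarrow> ('a \<Rightarrow> real) topology" where
  "realization P le = topology (realization_open P le)"

end

theory Submission
  imports Defs
begin

text \<open>The maps \<open>s \<mapsto> (fst ` s, snd ` s)\<close> and \<open>(\<sigma>, \<tau>) \<mapsto> \<sigma> \<times> \<tau>\<close> are order preserving
  between the two posets; one composite is the identity and the other dominates the identity.
  Comparable order preserving maps \<open>u \<le> v\<close> induce homotopic maps of realizations, so the
  realizations are homotopy equivalent.

  The homotopy is explicit in barycentric coordinates. A point \<open>p\<close> on the simplex of a chain
  \<open>x\<^sub>1 < \<dots> < x\<^sub>n\<close> cuts \<open>[0, 1]\<close> into consecutive intervals of lengths \<open>p x\<^sub>i\<close>; at time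
  \<open>t\<close> the mass below level \<open>1 - t\<close> is pushed forward along \<open>u\<close> and the rest along \<open>v\<close>. The
  \<open>u\<close>-part sits below the \<open>v\<close>-part and \<open>u \<le> v\<close>, so the image lies on a chain again. On a
  closed simplex the image stays in one of finitely many simplices on each of finitely many closed
  pieces, which gives continuity there; continuity on \<open>[0, 1] \<times> |P|\<close> then follows from the tube
  lemma, \<open>[0, 1]\<close> being locally compact.\<close>

section \<open>The topology of the realization\<close>

lemma openin_realization: "openin (realization P le) U \<longleftrightarrow> realization_open P le U"
  by (simp add: realization_def istopology_realization_open)

lemma topspace_simplex_topology [simp]:
  "topspace (simplex_topology P le c) = closed_simplex P le c"
  by (simp add: simplex_topology_def)

lemma closed_simplex_subset_carrier: "closed_simplex P le c \<subseteq> realization_carrier P le"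
  by (auto simp: closed_simplex_def)

lemma topspace_realization [simp]: "topspace (realization P le) = realization_carrier P le"
proof -
  have "realization_open P le (realization_carrier P le)"
    using openin_topspace[of "simplex_topology P le _"]
    by (simp add: realization_open_def Int_absorb1[OF closed_simplex_subset_carrier])
  then show ?thesis
    by (metis openin_realization openin_subset openin_topspace realization_open_def subset_antisym)
qed

lemma realization_carrierD:
  assumes "p \<in> realization_carrier P le"
  shows "finite (supp p)" "is_chain_in P le (supp p)" "0 \<le> p x" "sum p (supp p) = 1"
  using assms by (auto simp: realization_carrier_def)

lemma is_chain_in_subset: "is_chain_in P le c \<Longrightarrow> c' \<subseteq> c \<Longrightarrow> is_chain_in P le c'"
  unfolding is_chain_in_def by blast

lemma supp_in_closed_simplex: "p \<in> realization_carrier P le \<Longrightarrow> p \<in> closed_simplex P le (supp p)"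
  by (simp add: closed_simplex_def)

lemma continuous_map_simplex_inclusion:
  assumes "finite c" "is_chain_in P le c"
  shows "continuous_map (simplex_topology P le c) (realization P le) id"
  unfolding continuous_map_def
proof safe
  fix U assume "openin (realization P le) U"
  then have "openin (simplex_topology P le c) (U \<inter> closed_simplex P le c)"
    using assms by (simp add: openin_realization realization_open_def)
  moreover have "{p \<in> topspace (simplex_topology P le c). id p \<in> U} = U \<inter> closed_simplex P le c"
    by auto
  ultimately show "openin (simplex_topology P le c) {p \<in> topspace (simplex_topology P le c). id p \<in> U}"
    by simp
qed (use closed_simplex_subset_carrier in auto)

lemma continuous_map_into_realization:
  assumes "continuous_map Z (powertop_real UNIV) f"
    and "\<And>z. z \<in> topspace Z \<Longrightarrow> f z \<in> closed_simplex P le c" "finite c" "is_chain_in P le c"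
  shows "continuous_map Z (realization P le) f"
proof -
  have "continuous_map Z (simplex_topology P le c) f"
    using assms(1,2) by (auto simp: simplex_topology_def continuous_map_in_subtopology)
  then show ?thesis
    using continuous_map_compose[OF _ continuous_map_simplex_inclusion[OF assms(3,4)]] by simp
qed

lemma openin_realization_tube:
  assumes W: "\<And>c. finite c \<Longrightarrow> is_chain_in P le c \<Longrightarrow>
      openin (prod_topology T (simplex_topology P le c)) (W \<inter> (topspace T \<times> closed_simplex P le c))"
    and K: "compactin T K"
  shows "openin (realization P le) {p \<in> realization_carrier P le. K \<times> {p} \<subseteq> W}"
  unfolding openin_realization realization_open_def
proof safe
  fix c assume c: "finite c" "is_chain_in P le c"
  let ?Wc = "W \<inter> (topspace T \<times> closed_simplex P le c)"
  have "K \<subseteq> topspace T"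
    using K compactin_subset_topspace by blast
  then have eq: "{p \<in> realization_carrier P le. K \<times> {p} \<subseteq> W} \<inter> closed_simplex P le c
      = {p \<in> closed_simplex P le c. K \<times> {p} \<subseteq> ?Wc}"
    using closed_simplex_subset_carrier by blast
  show "openin (simplex_topology P le c)
      ({p \<in> realization_carrier P le. K \<times> {p} \<subseteq> W} \<inter> closed_simplex P le c)"
    unfolding eq openin_subopen[of _ "{p \<in> closed_simplex P le c. K \<times> {p} \<subseteq> ?Wc}"]
  proof safe
    fix p assume p: "p \<in> closed_simplex P le c" "K \<times> {p} \<subseteq> ?Wc"
    then obtain U V where UV: "openin (simplex_topology P le c) V" "p \<in> V" "K \<subseteq> U" "U \<times> V \<subseteq> ?Wc"
      using tube_lemma_left[OF W[OF c] K, of p] by auto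
    moreover have "V \<subseteq> closed_simplex P le c"
      using openin_subset[OF UV(1)] by simp
    ultimately show "\<exists>V. openin (simplex_topology P le c) V \<and> p \<in> V \<and>
        V \<subseteq> {p \<in> closed_simplex P le c. K \<times> {p} \<subseteq> ?Wc}"
      by blast
  qed
qed

lemma continuous_map_from_prod_realization:
  assumes T: "locally_compact_space T" "Hausdorff_space T"
    and f: "\<And>t p. t \<in> topspace T \<Longrightarrow> p \<in> realization_carrier P le \<Longrightarrow> f (t, p) \<in> topspace Y"
    and cont: "\<And>c. finite c \<Longrightarrow> is_chain_in P le c \<Longrightarrow>
      continuous_map (prod_topology T (simplex_topology P le c)) Y f"
  shows "continuous_map (prod_topology T (realization P le)) Y f"
  unfolding continuous_map_def
proof safe
  fix U assume U: "openin Y U"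
  define W where "W = {z \<in> topspace T \<times> realization_carrier P le. f z \<in> U}"
  have W_simplex: "openin (prod_topology T (simplex_topology P le c)) (W \<inter> (topspace T \<times> closed_simplex P le c))"
    if "finite c" "is_chain_in P le c" for c
  proof -
    have "W \<inter> (topspace T \<times> closed_simplex P le c)
        = {z \<in> topspace (prod_topology T (simplex_topology P le c)). f z \<in> U}"
      using closed_simplex_subset_carrier by (auto simp: W_def)
    then show ?thesis
      using cont[OF that] U by (simp add: continuous_map_def)
  qed
  have "openin (prod_topology T (realization P le)) W"
    unfolding openin_subopen[of _ W]
  proof safe
    fix t0 p0 assume tp0: "(t0, p0) \<in> W"
    then have p0: "p0 \<in> closed_simplex P le (supp p0)" and c0: "finite (supp p0)" "is_chain_in P le (supp p0)"
      by (auto simp: W_def supp_in_closed_simplex realization_carrierD)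
    define slice where "slice = {t \<in> topspace T. (t, p0) \<in> W \<inter> (topspace T \<times> closed_simplex P le (supp p0))}"
    have "continuous_map T (prod_topology T (simplex_topology P le (supp p0))) (\<lambda>t. (t, p0))"
      using p0 by (auto intro!: continuous_map_pairedI)
    then have "openin T slice"
      unfolding slice_def using W_simplex[OF c0] openin_continuous_map_preimage by blast
    moreover have "t0 \<in> slice"
      using tp0 p0 by (auto simp: W_def slice_def)
    moreover have "neighbourhood_base_of (compactin T) T"
      using T locally_compact_space_neighbourhood_base by blast
    ultimately obtain S K where SK: "openin T S" "compactin T K" "t0 \<in> S" "S \<subseteq> K" "K \<subseteq> slice"
      unfolding neighbourhood_base_of by (metis (no_types, lifting))
    define N where "N = {p \<in> realization_carrier P le. K \<times> {p} \<subseteq> W}"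
    have "openin (realization P le) N"
      unfolding N_def using openin_realization_tube[OF W_simplex SK(2)] .
    moreover have "p0 \<in> N"
      using tp0 SK(5) by (auto simp: N_def W_def slice_def)
    moreover have "S \<times> N \<subseteq> W"
      using SK(4) unfolding N_def by blast
    ultimately show "\<exists>V. openin (prod_topology T (realization P le)) V \<and> (t0, p0) \<in> V \<and> V \<subseteq> W"
      using SK(1,3) by (intro exI[of _ "S \<times> N"]) (simp add: openin_prod_Times_iff)
  qed
  then show "openin (prod_topology T (realization P le))
      {z \<in> topspace (prod_topology T (realization P le)). f z \<in> U}"
    by (simp only: W_def topspace_prod_topology topspace_realization)
qed (simp add: f)

section \<open>Maps of realizations induced by maps of posets\<close>

definition pushforward :: "('a \<Rightarrow> 'b) \<Rightarrow> 'a set \<Rightarrow> ('a \<Rightarrow> real) \<Rightarrow> 'b \<Rightarrow> real" where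
  "pushforward h S w q = sum w {x \<in> S. h x = q}"

definition realization_map :: "('a \<Rightarrow> 'b) \<Rightarrow> ('a \<Rightarrow> real) \<Rightarrow> 'b \<Rightarrow> real" where
  "realization_map h p = pushforward h (supp p) p"

lemma pushforward_mono_neutral:
  assumes "finite T" "S \<subseteq> T" "\<And>x. x \<in> T - S \<Longrightarrow> w x = 0"
  shows "pushforward h T w = pushforward h S w"
  unfolding pushforward_def by (intro ext sum.mono_neutral_right) (use assms in auto)

lemma pushforward_cong:
  "(\<And>x. x \<in> S \<Longrightarrow> w x = w' x) \<Longrightarrow> pushforward h S w = pushforward h S w'"
  unfolding pushforward_def by (intro ext sum.cong) auto

lemma pushforward_zero [simp]: "pushforward h S (\<lambda>_. 0) = (\<lambda>_. 0)"
  by (simp add: pushforward_def fun_eq_iff)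

lemma sum_pushforward:
  assumes "finite S" "finite T" "h ` S \<subseteq> T"
  shows "sum (pushforward h S w) T = sum w S"
  unfolding pushforward_def using sum.group[OF assms] by simp

lemma supp_pushforward: "supp (pushforward h S w) \<subseteq> h ` {x \<in> S. w x \<noteq> 0}"
proof
  fix q assume "q \<in> supp (pushforward h S w)"
  then have "sum w {x \<in> S. h x = q} \<noteq> 0"
    by (simp add: supp_def pushforward_def)
  then obtain x where "x \<in> S" "h x = q" "w x \<noteq> 0"
    using sum.neutral[of "{x \<in> S. h x = q}" w] by blast
  then show "q \<in> h ` {x \<in> S. w x \<noteq> 0}"
    by blast
qed

lemma realization_map_comp:
  assumes "finite (supp p)"
  shows "realization_map g (realization_map f p) = realization_map (g \<circ> f) p"
proof
  fix q
  let ?S = "supp p"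
  have "realization_map g (realization_map f p) = pushforward g (f ` ?S) (realization_map f p)"
    unfolding realization_map_def[of g]
    using assms supp_pushforward[of f ?S p]
    by (intro pushforward_mono_neutral[symmetric]) (auto simp: realization_map_def supp_def)
  then have "realization_map g (realization_map f p) q
      = (\<Sum>y \<in> {y \<in> f ` ?S. g y = q}. sum p {x \<in> {x \<in> ?S. g (f x) = q}. f x = y})"
    by (auto simp: pushforward_def realization_map_def intro!: sum.cong arg_cong[where f="sum p"])
  also have "\<dots> = sum p {x \<in> ?S. g (f x) = q}"
    by (rule sum.group) (use assms in auto)
  finally show "realization_map g (realization_map f p) q = realization_map (g \<circ> f) p q"
    by (simp add: realization_map_def pushforward_def)
qed

lemma realization_map_id: "realization_map (\<lambda>x. x) p = p"
proof
  fix q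
  have "{x \<in> supp p. x = q} = (if p q = 0 then {} else {q})"
    by (auto simp: supp_def)
  then show "realization_map (\<lambda>x. x) p q = p q"
    by (simp add: realization_map_def pushforward_def)
qed

section \<open>Comparable maps of posets induce homotopic maps\<close>

definition mass_below :: "('a \<Rightarrow> 'a \<Rightarrow> bool) \<Rightarrow> 'a set \<Rightarrow> ('a \<Rightarrow> real) \<Rightarrow> 'a \<Rightarrow> real" where
  "mass_below le S p x = sum p {y \<in> S. le y x}"

text \<open>Lay out the mass of \<open>p\<close> along the chain \<open>S\<close> in increasing order, so that \<open>x\<close> occupies
  the interval \<open>[mass_below le S p x - p x, mass_below le S p x]\<close>. The part of this interval
  below level \<open>1 - t\<close> is \<open>lower_part\<close>, the rest \<open>upper_part\<close>.\<close>

definition lower_part :: "('a \<Rightarrow> 'a \<Rightarrow> bool) \<Rightarrow> 'a set \<Rightarrow> real \<Rightarrow> ('a \<Rightarrow> real) \<Rightarrow> 'a \<Rightarrow> real" where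
  "lower_part le S t p x = min (mass_below le S p x) (1 - t) - min (mass_below le S p x - p x) (1 - t)"

definition upper_part :: "('a \<Rightarrow> 'a \<Rightarrow> bool) \<Rightarrow> 'a set \<Rightarrow> real \<Rightarrow> ('a \<Rightarrow> real) \<Rightarrow> 'a \<Rightarrow> real" where
  "upper_part le S t p x = p x - lower_part le S t p x"

definition poset_homotopy ::
    "('a \<Rightarrow> 'b) \<Rightarrow> ('a \<Rightarrow> 'b) \<Rightarrow> ('a \<Rightarrow> 'a \<Rightarrow> bool) \<Rightarrow> 'a set \<Rightarrow> real \<Rightarrow> ('a \<Rightarrow> real) \<Rightarrow> 'b \<Rightarrow> real" where
  "poset_homotopy u v le S t p q =
     pushforward u S (lower_part le S t p) q + pushforward v S (upper_part le S t p) q"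

definition is_split_point ::
    "('a \<Rightarrow> 'a \<Rightarrow> bool) \<Rightarrow> 'a set \<Rightarrow> real \<Rightarrow> ('a \<Rightarrow> real) \<Rightarrow> 'a \<Rightarrow> bool" where
  "is_split_point le c t p k \<longleftrightarrow>
     (\<forall>x\<in>c. (\<not> le x k \<longrightarrow> lower_part le c t p x = 0) \<and> (\<not> le k x \<longrightarrow> upper_part le c t p x = 0))"

lemma lower_part_eq_0: "p x = 0 \<Longrightarrow> lower_part le S t p x = 0"
  and upper_part_eq_0: "p x = 0 \<Longrightarrow> upper_part le S t p x = 0"
  by (simp_all add: lower_part_def upper_part_def)

lemma lower_part_nonneg: "0 \<le> p x \<Longrightarrow> 0 \<le> lower_part le S t p x"
  and upper_part_nonneg: "0 \<le> p x \<Longrightarrow> 0 \<le> upper_part le S t p x"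
  by (simp_all add: lower_part_def upper_part_def)

lemma mass_below_mono_neutral:
  assumes "finite T" "S \<subseteq> T" "\<And>x. x \<in> T - S \<Longrightarrow> p x = 0"
  shows "mass_below le T p = mass_below le S p"
  unfolding mass_below_def by (intro ext sum.mono_neutral_right) (use assms in auto)

lemma poset_homotopy_mono_neutral:
  assumes "finite T" "S \<subseteq> T" "\<And>x. x \<in> T - S \<Longrightarrow> p x = 0"
  shows "poset_homotopy u v le T t p = poset_homotopy u v le S t p"
proof -
  have parts: "lower_part le T t p = lower_part le S t p" "upper_part le T t p = upper_part le S t p"
    using mass_below_mono_neutral[OF assms] by (simp_all add: lower_part_def upper_part_def fun_eq_iff)
  have pushes: "pushforward h T (lower_part le S t p) = pushforward h S (lower_part le S t p)"
    "pushforward h T (upper_part le S t p) = pushforward h S (upper_part le S t p)" for h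
    using assms by (auto intro!: pushforward_mono_neutral lower_part_eq_0 upper_part_eq_0)
  show ?thesis
    by (intro ext) (simp add: poset_homotopy_def parts pushes)
qed

lemma poset_homotopy_supp:
  assumes "finite c" "supp p \<subseteq> c"
  shows "poset_homotopy u v le c t p = poset_homotopy u v le (supp p) t p"
  by (rule poset_homotopy_mono_neutral) (use assms in \<open>auto simp: supp_def\<close>)

lemma mass_below_le_sum:
  assumes "finite S" "\<And>x. 0 \<le> p x"
  shows "mass_below le S p x \<le> sum p S"
  unfolding mass_below_def by (rule sum_mono2) (use assms in auto)

lemma mass_below_ge:
  assumes "finite S" "\<And>x. 0 \<le> p x" "x \<in> S" "le x x"
  shows "p x \<le> mass_below le S p x"
  unfolding mass_below_def using assms by (intro member_le_sum) auto

lemma mass_below_strict_mono: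
  assumes "finite S" "\<And>x. 0 \<le> p x" "x \<in> S" "le y x" "\<not> le x y"
    and "reflp le" "transp le"
  shows "mass_below le S p y \<le> mass_below le S p x - p x"
proof -
  have "mass_below le S p x = p x + sum p ({z \<in> S. le z x} - {x})"
    unfolding mass_below_def using assms by (subst sum.remove[of _ x]) (auto dest: reflpD)
  moreover have "mass_below le S p y \<le> sum p ({z \<in> S. le z x} - {x})"
    unfolding mass_below_def using assms by (intro sum_mono2) (auto dest: transpD)
  ultimately show ?thesis
    by simp
qed

lemma lower_support_le_upper_support:
  assumes "reflp le" "transp le" "finite S" "\<And>x y. x \<in> S \<Longrightarrow> y \<in> S \<Longrightarrow> le x y \<or> le y x"
    and "\<And>x. 0 \<le> p x" "x \<in> S" "y \<in> S"
    and "lower_part le S t p x \<noteq> 0" "upper_part le S t p y \<noteq> 0"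
  shows "le x y"
proof (rule ccontr)
  assume "\<not> le x y"
  then have "mass_below le S p y \<le> mass_below le S p x - p x"
    using assms by (intro mass_below_strict_mono) blast+
  moreover have "mass_below le S p x - p x < 1 - t"
    using assms(5)[of x] assms(8) by (auto simp: lower_part_def min_def split: if_splits)
  moreover have "mass_below le S p y > 1 - t"
    using assms(5)[of y] assms(9) by (auto simp: lower_part_def upper_part_def min_def split: if_splits)
  ultimately show False
    by linarith
qed

lemma finite_chain_has_greatest:
  assumes "finite X" "X \<noteq> {}" "\<And>x y. x \<in> X \<Longrightarrow> y \<in> X \<Longrightarrow> le x y \<or> le y x" "transp le"
  shows "\<exists>m\<in>X. \<forall>x\<in>X. le x m"
  using assms(1-3)
proof (induction X rule: finite_ne_induct)
  case (insert x F)
  then obtain m where m: "m \<in> F" "\<forall>y\<in>F. le y m"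
    by auto
  then show ?case
    using insert.prems transpD[OF assms(4)] by (cases "le x m") blast+
qed blast

lemma exists_split_point:
  assumes "reflp le" "transp le" "finite c" "is_chain_in P le c" "p \<in> closed_simplex P le c"
  shows "\<exists>k\<in>c. is_split_point le c t p k"
proof -
  have chain: "\<And>x y. x \<in> c \<Longrightarrow> y \<in> c \<Longrightarrow> le x y \<or> le y x"
    using assms(4) by (auto simp: is_chain_in_def)
  have nonneg: "\<And>x. 0 \<le> p x"
    using assms(5) by (auto simp: closed_simplex_def realization_carrier_def)
  have "c \<noteq> {}"
    using assms(5) by (auto simp: closed_simplex_def realization_carrier_def)
  let ?A = "{x \<in> c. lower_part le c t p x \<noteq> 0}"
  have A_below: "le x y" if "x \<in> ?A" "y \<in> c" "upper_part le c t p y \<noteq> 0" for x y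
    using lower_support_le_upper_support[of le c p x y t] assms(1-3) chain nonneg that by blast
  show ?thesis
  proof (cases "?A = {}")
    case True
    obtain k where "k \<in> c" "\<forall>x\<in>c. le k x"
      using finite_chain_has_greatest[of c "\<lambda>x y. le y x"] assms(2,3) \<open>c \<noteq> {}\<close> chain
      by (auto simp: transp_def)
    with True show ?thesis
      by (auto simp: is_split_point_def)
  next
    case False
    obtain k where "k \<in> ?A" "\<forall>x\<in>?A. le x k"
      using finite_chain_has_greatest[of ?A le] assms(2,3) False chain by auto
    with A_below show ?thesis
      by (auto simp: is_split_point_def)
  qed
qed

lemma poset_homotopy_0:
  assumes "p \<in> realization_carrier P le"
  shows "poset_homotopy u v le (supp p) 0 p = realization_map u p"
proof -
  note p = realization_carrierD[OF assms]
  have "lower_part le (supp p) 0 p x = p x" for x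
  proof -
    have "0 \<le> p x" "mass_below le (supp p) p x \<le> 1"
      using mass_below_le_sum[of "supp p" p le x] p by auto
    then show ?thesis
      by (simp add: lower_part_def min_def)
  qed
  then have "lower_part le (supp p) 0 p = p" "upper_part le (supp p) 0 p = (\<lambda>_. 0)"
    by (simp_all add: upper_part_def fun_eq_iff)
  then show ?thesis
    by (intro ext) (simp add: poset_homotopy_def realization_map_def)
qed

lemma poset_homotopy_1:
  assumes "reflp le" "p \<in> realization_carrier P le"
  shows "poset_homotopy u v le (supp p) 1 p = realization_map v p"
proof -
  note p = realization_carrierD[OF assms(2)]
  have "lower_part le (supp p) 1 p x = 0" if "x \<in> supp p" for x
  proof -
    have "0 \<le> p x" "p x \<le> mass_below le (supp p) p x"
      using mass_below_ge[of "supp p" p x le] p that assms(1) by (auto simp: reflpD)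
    then show ?thesis
      by (simp add: lower_part_def min_def)
  qed
  then have "pushforward u (supp p) (lower_part le (supp p) 1 p) = (\<lambda>_. 0)"
    "pushforward v (supp p) (upper_part le (supp p) 1 p) = pushforward v (supp p) p"
    by (auto simp: upper_part_def cong: pushforward_cong)
  then show ?thesis
    by (intro ext) (simp add: poset_homotopy_def realization_map_def)
qed

lemma continuous_map_lower_part [continuous_intros]:
  assumes "finite S" "continuous_map X euclideanreal f" "continuous_map X (powertop_real UNIV) g"
  shows "continuous_map X euclideanreal (\<lambda>z. lower_part le S (f z) (g z) x)"
  using assms unfolding lower_part_def mass_below_def continuous_map_componentwise_UNIV
  by (intro continuous_intros) auto

lemma continuous_map_upper_part [continuous_intros]:
  assumes "finite S" "continuous_map X euclideanreal f" "continuous_map X (powertop_real UNIV) g"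
  shows "continuous_map X euclideanreal (\<lambda>z. upper_part le S (f z) (g z) x)"
  using assms unfolding upper_part_def continuous_map_componentwise_UNIV
  by (intro continuous_intros) (auto simp: continuous_map_componentwise_UNIV)

lemma continuous_map_poset_homotopy:
  assumes "finite S" "continuous_map X euclideanreal f" "continuous_map X (powertop_real UNIV) g"
  shows "continuous_map X (powertop_real UNIV) (\<lambda>z. poset_homotopy u v le S (f z) (g z))"
  using assms unfolding continuous_map_componentwise_UNIV poset_homotopy_def pushforward_def
  by (intro allI continuous_intros) (auto simp: continuous_map_componentwise_UNIV)

lemma continuous_map_fst_prod_simplex:
  "continuous_map (prod_topology (top_of_set T) (simplex_topology P le c)) euclideanreal fst"
  by (metis continuous_map_fst continuous_map_in_subtopology)

lemma continuous_map_snd_prod_simplex: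
  "continuous_map (prod_topology (top_of_set T) (simplex_topology P le c)) (powertop_real UNIV) snd"
  by (metis continuous_map_snd continuous_map_in_subtopology simplex_topology_def)

lemma closedin_common_zeros:
  assumes "finite I" "\<And>i. i \<in> I \<Longrightarrow> continuous_map X euclideanreal (f i)"
  shows "closedin X {z \<in> topspace X. \<forall>i\<in>I. f i z = 0}"
  using assms
proof (induction I rule: finite_induct)
  case (insert i I)
  have "closedin X {z \<in> topspace X. f i z \<in> {0}}"
    using insert.prems by (intro closedin_continuous_map_preimage) auto
  then have "closedin X ({z \<in> topspace X. f i z \<in> {0}} \<inter> {z \<in> topspace X. \<forall>i\<in>I. f i z = 0})"
    using insert by (intro closedin_Int) auto
  moreover have "{z \<in> topspace X. \<forall>j\<in>insert i I. f j z = 0}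
      = {z \<in> topspace X. f i z \<in> {0}} \<inter> {z \<in> topspace X. \<forall>i\<in>I. f i z = 0}"
    by auto
  ultimately show ?case
    by simp
qed simp

context
  fixes P :: "'a set" and le :: "'a \<Rightarrow> 'a \<Rightarrow> bool" and Q :: "'b set" and leQ :: "'b \<Rightarrow> 'b \<Rightarrow> bool"
    and u v :: "'a \<Rightarrow> 'b"
  assumes refl_le: "reflp le" and trans_le: "transp le" and trans_leQ: "transp leQ"
    and maps: "u ` P \<subseteq> Q" "v ` P \<subseteq> Q"
    and mono: "monotone_on P le leQ u" "monotone_on P le leQ v"
    and below: "\<And>x. x \<in> P \<Longrightarrow> leQ (u x) (v x)"
begin

lemma is_chain_in_image_Un:
  assumes chain: "is_chain_in P le (A \<union> B)" and AB: "\<And>a b. a \<in> A \<Longrightarrow> b \<in> B \<Longrightarrow> le a b"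
  shows "is_chain_in Q leQ (u ` A \<union> v ` B)"
proof -
  have AB_P: "A \<union> B \<subseteq> P"
    using chain by (simp add: is_chain_in_def)
  have comparable: "leQ (h x) (h y) \<or> leQ (h y) (h x)"
    if "monotone_on P le leQ h" "x \<in> A \<union> B" "y \<in> A \<union> B" for h x y
  proof -
    have "x \<in> P" "y \<in> P"
      using that AB_P by auto
    moreover have "le x y \<or> le y x"
      using chain that by (auto simp: is_chain_in_def)
    ultimately show ?thesis
      using monotone_onD[OF that(1)] by blast
  qed
  have u_below_v: "leQ (u a) (v b)" if "a \<in> A" "b \<in> B" for a b
  proof -
    have "leQ (u a) (u b)"
      using monotone_onD[OF mono(1)] AB that AB_P by blast
    then show ?thesis
      using below[of b] that AB_P transpD[OF trans_leQ] by blast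
  qed
  show ?thesis
    unfolding is_chain_in_def
  proof (intro conjI ballI)
    show "u ` A \<union> v ` B \<subseteq> Q"
      using maps AB_P by blast
    fix q1 q2 assume "q1 \<in> u ` A \<union> v ` B" "q2 \<in> u ` A \<union> v ` B"
    then show "leQ q1 q2 \<or> leQ q2 q1"
      by (elim UnE imageE) (use comparable[OF mono(1)] comparable[OF mono(2)] u_below_v in blast)+
  qed
qed

lemma is_chain_in_split_image:
  assumes "is_chain_in P le c"
  shows "is_chain_in Q leQ (u ` {x \<in> c. le x k} \<union> v ` {x \<in> c. le k x})"
proof (rule is_chain_in_image_Un)
  show "is_chain_in P le ({x \<in> c. le x k} \<union> {x \<in> c. le k x})"
    using assms by (rule is_chain_in_subset) auto
  show "le a b" if "a \<in> {x \<in> c. le x k}" "b \<in> {x \<in> c. le k x}" for a b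
    using that transpD[OF trans_le] by blast
qed

lemma poset_homotopy_in_closed_simplex:
  assumes c: "finite c" "is_chain_in P le c" and p: "p \<in> closed_simplex P le c"
    and k: "is_split_point le c t p k"
  shows "poset_homotopy u v le c t p \<in> closed_simplex Q leQ (u ` {x \<in> c. le x k} \<union> v ` {x \<in> c. le k x})"
    (is "?H \<in> closed_simplex Q leQ ?c")
proof -
  have p_carrier: "p \<in> realization_carrier P le" and "supp p \<subseteq> c"
    using p by (auto simp: closed_simplex_def)
  note p' = realization_carrierD[OF p_carrier]
  have nonneg: "0 \<le> ?H q" for q
    unfolding poset_homotopy_def pushforward_def using p'(3)
    by (intro add_nonneg_nonneg sum_nonneg lower_part_nonneg upper_part_nonneg)
  have lower: "{x \<in> c. lower_part le c t p x \<noteq> 0} \<subseteq> {x \<in> c. le x k}"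
    and upper: "{x \<in> c. upper_part le c t p x \<noteq> 0} \<subseteq> {x \<in> c. le k x}"
    using k unfolding is_split_point_def by blast+
  note order_trans[OF supp_pushforward image_mono[OF lower], of u]
    order_trans[OF supp_pushforward image_mono[OF upper], of v]
  moreover have "supp ?H \<subseteq> supp (pushforward u c (lower_part le c t p)) \<union> supp (pushforward v c (upper_part le c t p))"
    by (auto simp: supp_def poset_homotopy_def)
  ultimately have supp_H: "supp ?H \<subseteq> ?c"
    by blast
  have "sum ?H (supp ?H) = sum ?H (u ` c \<union> v ` c)"
    using supp_H c(1) by (intro sum.mono_neutral_left) (auto simp: supp_def)
  also have "\<dots> = sum (lower_part le c t p) c + sum (upper_part le c t p) c"
    using c(1) by (simp add: poset_homotopy_def sum.distrib sum_pushforward)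
  also have "\<dots> = sum p c"
    by (simp add: upper_part_def sum.distrib[symmetric])
  also have "\<dots> = sum p (supp p)"
    using \<open>supp p \<subseteq> c\<close> c(1) by (intro sum.mono_neutral_right) (auto simp: supp_def)
  also have "\<dots> = 1"
    by (fact p'(4))
  moreover have "is_chain_in Q leQ (supp ?H)"
    using is_chain_in_subset[OF is_chain_in_split_image[OF c(2)] supp_H] .
  ultimately show ?thesis
    using supp_H nonneg c(1) finite_subset[OF supp_H]
    by (auto simp: closed_simplex_def realization_carrier_def)
qed

lemma continuous_map_poset_homotopy_simplex:
  assumes c: "finite c" "is_chain_in P le c"
  shows "continuous_map (prod_topology (top_of_set {0..1}) (simplex_topology P le c)) (realization Q leQ)
      (\<lambda>z. poset_homotopy u v le c (fst z) (snd z))"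
proof -
  define Z where "Z = prod_topology (top_of_set {0..1::real}) (simplex_topology P le c)"
  define H where "H z = poset_homotopy u v le c (fst z) (snd z)" for z
  define split where "split k = {z \<in> topspace Z. is_split_point le c (fst z) (snd z) k}" for k
  have H: "continuous_map Z (powertop_real UNIV) H"
    unfolding Z_def H_def using c(1)
    by (intro continuous_map_poset_homotopy continuous_map_fst_prod_simplex
        continuous_map_snd_prod_simplex)
  have lower: "continuous_map Z euclideanreal (\<lambda>z. lower_part le c (fst z) (snd z) x)" for x
    unfolding Z_def using c(1)
    by (intro continuous_map_lower_part continuous_map_fst_prod_simplex
        continuous_map_snd_prod_simplex)
  have upper: "continuous_map Z euclideanreal (\<lambda>z. upper_part le c (fst z) (snd z) x)" for x
    unfolding Z_def using c(1)
    by (intro continuous_map_upper_part continuous_map_fst_prod_simplex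
        continuous_map_snd_prod_simplex)
  have "continuous_map Z (realization Q leQ) H"
  proof (rule pasting_lemma_closed[where I=c and T=split and f="\<lambda>_. H"])
    show "closedin Z (split k)" for k
    proof -
      have eq: "split k = {z \<in> topspace Z. \<forall>x\<in>{x \<in> c. \<not> le x k}. lower_part le c (fst z) (snd z) x = 0}
          \<inter> {z \<in> topspace Z. \<forall>x\<in>{x \<in> c. \<not> le k x}. upper_part le c (fst z) (snd z) x = 0}"
        by (auto simp: split_def is_split_point_def)
      show ?thesis
        unfolding eq by (intro closedin_Int closedin_common_zeros) (use c(1) lower upper in auto)
    qed
    show "continuous_map (subtopology Z (split k)) (realization Q leQ) H" if "k \<in> c" for k
    proof (rule continuous_map_into_realization)
      show "continuous_map (subtopology Z (split k)) (powertop_real UNIV) H"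
        by (rule continuous_map_from_subtopology[OF H])
      show "H z \<in> closed_simplex Q leQ (u ` {x \<in> c. le x k} \<union> v ` {x \<in> c. le k x})"
        if "z \<in> topspace (subtopology Z (split k))" for z
        using that c poset_homotopy_in_closed_simplex
        by (auto simp: H_def split_def Z_def)
    qed (use c(1) is_chain_in_split_image[OF c(2)] in auto)
    show "\<exists>k. k \<in> c \<and> z \<in> split k \<and> H z = H z" if z: "z \<in> topspace Z" for z
    proof -
      obtain k where "k \<in> c" "is_split_point le c (fst z) (snd z) k"
        using exists_split_point[OF refl_le trans_le c, of "snd z" "fst z"] z by (auto simp: Z_def)
      then show ?thesis
        using z by (auto simp: split_def)
    qed
  qed (use c(1) in auto)
  then show ?thesis
    unfolding Z_def H_def .
qed

lemma realization_map_homotopic: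
  "homotopic_with (\<lambda>_. True) (realization P le) (realization Q leQ) (realization_map u) (realization_map v)"
proof -
  define h where "h z = poset_homotopy u v le (supp (snd z)) (fst z) (snd z)" for z
  have in_carrier: "h (t, p) \<in> realization_carrier Q leQ" if "p \<in> realization_carrier P le" for t p
  proof -
    note p = realization_carrierD[OF that] supp_in_closed_simplex[OF that]
    then obtain k where "is_split_point le (supp p) t p k"
      using exists_split_point[OF refl_le trans_le] by blast
    then show ?thesis
      using poset_homotopy_in_closed_simplex[OF p(1,2,5)] closed_simplex_subset_carrier[of Q leQ]
      by (auto simp: h_def)
  qed
  have "continuous_map (prod_topology (top_of_set {0..1}) (realization P le)) (realization Q leQ) h"
  proof (rule continuous_map_from_prod_realization)
    show "locally_compact_space (top_of_set {0..1::real})"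
      using compact_space_subtopology[of euclideanreal "{0..1::real}"]
      by (simp add: compact_imp_locally_compact_space)
    show "Hausdorff_space (top_of_set {0..1::real})"
      by (simp add: Hausdorff_space_subtopology)
    show "continuous_map (prod_topology (top_of_set {0..1}) (simplex_topology P le c)) (realization Q leQ) h"
      if "finite c" "is_chain_in P le c" for c
      using continuous_map_poset_homotopy_simplex[OF that]
    proof (rule continuous_map_eq)
      fix z :: "real \<times> ('a \<Rightarrow> real)"
      assume "z \<in> topspace (prod_topology (top_of_set {0..1}) (simplex_topology P le c))"
      then show "poset_homotopy u v le c (fst z) (snd z) = h z"
        using poset_homotopy_supp[OF that(1)] by (auto simp: h_def closed_simplex_def)
    qed
  qed (use in_carrier in auto)
  moreover have "h (0, p) = realization_map u p" "h (1, p) = realization_map v p"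
    if "p \<in> realization_carrier P le" for p
    using poset_homotopy_0[OF that] poset_homotopy_1[OF refl_le that] by (simp_all add: h_def)
  ultimately show ?thesis
    by (subst homotopic_with) (auto intro!: exI[of _ h])
qed

end

lemma continuous_map_realization_map:
  assumes "reflp le" "transp le" "reflp leQ" "transp leQ" "f ` P \<subseteq> Q" "monotone_on P le leQ f"
  shows "continuous_map (realization P le) (realization Q leQ) (realization_map f)"
proof -
  have "homotopic_with (\<lambda>_. True) (realization P le) (realization Q leQ) (realization_map f) (realization_map f)"
    by (rule realization_map_homotopic) (use assms in \<open>auto simp: reflpD\<close>)
  then show ?thesis
    by simp
qed

lemma realization_map_comp_homotopic_id:
  assumes "reflp le" "transp le" "reflp leQ" "transp leQ" "f ` P \<subseteq> Q" "g ` Q \<subseteq> P"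
    and "monotone_on P le leQ f" "monotone_on Q leQ le g" "\<And>x. x \<in> P \<Longrightarrow> le x (g (f x))"
  shows "homotopic_with (\<lambda>_. True) (realization P le) (realization P le)
      (realization_map g \<circ> realization_map f) id"
proof -
  let ?X = "realization P le"
  have gf: "(g \<circ> f) ` P \<subseteq> P" "monotone_on P le le (g \<circ> f)"
    using assms(5-8) by (auto intro: monotone_on_o)
  have "continuous_map ?X (realization Q leQ) (realization_map f)"
    "continuous_map (realization Q leQ) ?X (realization_map g)"
    by (rule continuous_map_realization_map; use assms in simp)+
  then have cont: "continuous_map ?X ?X (realization_map g \<circ> realization_map f)"
    by (rule continuous_map_compose)
  have "homotopic_with (\<lambda>_. True) ?X ?X (realization_map g \<circ> realization_map f) (realization_map (g \<circ> f))"
  proof (rule homotopic_with_equal[OF _ _ cont])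
    fix p assume "p \<in> topspace ?X"
    then have "finite (supp p)"
      by (simp add: realization_carrier_def)
    then show "(realization_map g \<circ> realization_map f) p = realization_map (g \<circ> f) p"
      by (simp only: comp_apply realization_map_comp)
  qed simp_all
  moreover have "homotopic_with (\<lambda>_. True) ?X ?X (realization_map (\<lambda>x. x)) (realization_map (g \<circ> f))"
    by (rule realization_map_homotopic) (use assms(1,2,9) gf in \<open>auto simp: reflpD monotone_on_def\<close>)
  moreover have "realization_map (\<lambda>x. x) = id"
    by (simp add: realization_map_id fun_eq_iff)
  ultimately show ?thesis
    by (metis homotopic_with_symD homotopic_with_trans)
qed

lemma homotopy_equivalent_realization:
  assumes "reflp le" "transp le" "reflp leQ" "transp leQ" "f ` P \<subseteq> Q" "g ` Q \<subseteq> P"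
    and "monotone_on P le leQ f" "monotone_on Q leQ le g"
    and "\<And>x. x \<in> P \<Longrightarrow> le x (g (f x))" "\<And>y. y \<in> Q \<Longrightarrow> leQ y (f (g y))"
  shows "realization P le homotopy_equivalent_space realization Q leQ"
  unfolding homotopy_equivalent_space_def
proof (intro exI conjI)
  show "continuous_map (realization P le) (realization Q leQ) (realization_map f)"
    "continuous_map (realization Q leQ) (realization P le) (realization_map g)"
    by (rule continuous_map_realization_map; use assms in simp)+
  show "homotopic_with (\<lambda>_. True) (realization P le) (realization P le)
      (realization_map g \<circ> realization_map f) id"
    "homotopic_with (\<lambda>_. True) (realization Q leQ) (realization Q leQ)
      (realization_map f \<circ> realization_map g) id"
    by (rule realization_map_comp_homotopic_id; use assms in simp)+
qed

section \<open>The clique poset of \<open>X\<^sup>K\<^sup>2\<close> and the box poset\<close>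

lemma box_poset_fst_snd:
  assumes "s \<in> clique_poset (expK2_V V eps) (expK2_E V E eps)"
  shows "(fst ` s, snd ` s) \<in> box_poset V E eps"
proof -
  have s: "finite s" "s \<noteq> {}" "s \<subseteq> part V eps 0 \<times> part V eps 1"
    using assms by (auto simp: clique_poset_def expK2_V_def)
  have "(fst f, snd g) \<in> E" if "f \<in> s" "g \<in> s" for f g
    using assms that by (auto simp: clique_poset_def expK2_E_def)
  then have "fst ` s \<times> snd ` s \<subseteq> E"
    by blast
  moreover have "fst ` s \<subseteq> part V eps 0" "snd ` s \<subseteq> part V eps 1"
    using s(3) by auto
  ultimately show ?thesis
    using s(1,2) by (simp add: box_poset_def)
qed

lemma clique_poset_Times:
  assumes "sym E" "(\<sigma>, \<tau>) \<in> box_poset V E eps"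
  shows "\<sigma> \<times> \<tau> \<in> clique_poset (expK2_V V eps) (expK2_E V E eps)"
proof -
  have box: "finite \<sigma>" "\<sigma> \<noteq> {}" "\<sigma> \<subseteq> part V eps 0" "finite \<tau>" "\<tau> \<noteq> {}" "\<tau> \<subseteq> part V eps 1"
    "\<sigma> \<times> \<tau> \<subseteq> E"
    using assms(2) by (simp_all add: box_poset_def)
  have "(b, a) \<in> E" if "a \<in> \<sigma>" "b \<in> \<tau>" for a b
    using box(7) that symD[OF assms(1)] by blast
  then have "(\<sigma> \<times> \<tau>) \<times> (\<sigma> \<times> \<tau>) \<subseteq> expK2_E V E eps"
    using box(3,6,7) by (auto simp: expK2_E_def expK2_V_def)
  then show ?thesis
    using box(1-6) by (auto simp: clique_poset_def expK2_V_def)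
qed

theorem corollary3p4:
  fixes V :: "'v set" and E :: "('v \<times> 'v) set" and eps :: "'v \<Rightarrow> nat"
  assumes "is_bigraph V E eps"
  shows "realization (clique_poset (expK2_V V eps) (expK2_E V E eps)) (\<subseteq>)
           homotopy_equivalent_space
         realization (box_poset V E eps) box_le"
proof (rule homotopy_equivalent_realization)
  let ?F = "\<lambda>s :: ('v \<times> 'v) set. (fst ` s, snd ` s)" and ?G = "\<lambda>p :: 'v set \<times> 'v set. fst p \<times> snd p"
  have "sym E"
    using assms by (simp add: is_bigraph_def is_graph_def)
  show "?F ` clique_poset (expK2_V V eps) (expK2_E V E eps) \<subseteq> box_poset V E eps"
    using box_poset_fst_snd by blast
  show "?G ` box_poset V E eps \<subseteq> clique_poset (expK2_V V eps) (expK2_E V E eps)"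
    using clique_poset_Times[OF \<open>sym E\<close>] by fastforce
  show "monotone_on (clique_poset (expK2_V V eps) (expK2_E V E eps)) (\<subseteq>) box_le ?F"
    "monotone_on (box_poset V E eps) box_le (\<subseteq>) ?G"
    by (auto simp: monotone_on_def box_le_def)
  show "s \<subseteq> ?G (?F s)" for s
    by force
  show "box_le p (?F (?G p))" if "p \<in> box_poset V E eps" for p
    using that by (auto simp: box_poset_def box_le_def)
qed (auto simp: reflp_def transp_def box_le_def)

end
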